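(* For all $s\in\mathbb Z_+$ and $\gamma\in[0,1]$, \[ \Big\|\mathrm{diag}\big(Q\,\mathrm{diag}(Q^s)J\big)-\frac{\mathrm{tr}(Q^s)}{N^2}I\Big\|\le\Big\|\frac1N\mathrm{diag}(Q^s)-\frac{\mathrm{tr}(Q^s)}{N^2}I\Big\|\le\min\left\{\frac{4\min_{x\in E}[N-\#\mathcal R^\gamma_Q(x,s)]}{N}+\gamma,\ \frac{2\,\mathrm{tr}(|Q|^s;Q<1)}{N}\right\}. \]
   Context: $E$ is a finite set with $N=\#E>8$ elements, listed in a fixed order; $Q$ is an irreducible stochastic matrix on $E$ with $Q(x,y)=Q(y,x)$ for all $x,y$ and $\mathrm{tr}(Q)=0$. $I$ is the identity, $J$ the matrix with all entries $1/N$, $\mathrm{diag}(C)$ the diagonal matrix with the same diagonal as $C$. $\|C\|=\sum_{x,y\in E}|C(x,y)|$. $\mathcal R^\gamma_Q(x,s)=\{y\in E:|Q^s(x,x)-Q^s(y,y)|\le\gamma\}$. For a function $f$ on $[-1,1]$ and $A\subseteq\mathbb R$, $\mathrm{tr}(f(Q);Q\in A)=\mathrm{tr}(f(Q)\mathbf 1_A(Q))=\sum_{q\in A}f(q)$ over eigenvalues $q$ of $Q$ with multiplicity; in particular $\mathrm{tr}(|Q|^s;Q<1)=\sum_{q<1}|q|^s$. *)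

theory Defs
  imports "Jordan_Normal_Form.Matrix" "Jordan_Normal_Form.Char_Poly"
          "HOL-Computational_Algebra.Polynomial"
begin

text \<open>Matrices on E are N x N real matrices (E = {0..<N} in its fixed order).\<close>

definition mtrace :: "real mat \<Rightarrow> real" where
  "mtrace C = (\<Sum>i<dim_row C. C $$ (i,i))"

definition mdiag :: "real mat \<Rightarrow> real mat" where
  "mdiag C = mat (dim_row C) (dim_col C) (\<lambda>(i,j). if i = j then C $$ (i,i) else 0)"

definition Jmat :: "nat \<Rightarrow> real mat" where
  "Jmat N = mat N N (\<lambda>_. 1 / real N)"

definition entry_norm :: "real mat \<Rightarrow> real" where
  "entry_norm C = (\<Sum>i<dim_row C. \<Sum>j<dim_col C. \<bar>C $$ (i,j)\<bar>)"

definition stochastic :: "nat \<Rightarrow> real mat \<Rightarrow> bool" where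
  "stochastic N Q \<longleftrightarrow> Q \<in> carrier_mat N N \<and>
     (\<forall>i<N. \<forall>j<N. Q $$ (i,j) \<ge> 0) \<and> (\<forall>i<N. (\<Sum>j<N. Q $$ (i,j)) = 1)"

definition irreducible_mat :: "nat \<Rightarrow> real mat \<Rightarrow> bool" where
  "irreducible_mat N Q \<longleftrightarrow> (\<forall>i<N. \<forall>j<N. \<exists>n. (Q ^\<^sub>m n) $$ (i,j) > 0)"

definition Rset :: "nat \<Rightarrow> real mat \<Rightarrow> real \<Rightarrow> nat \<Rightarrow> nat \<Rightarrow> nat set" where
  "Rset N Q \<gamma> x s = {y. y < N \<and> \<bar>(Q ^\<^sub>m s) $$ (x,x) - (Q ^\<^sub>m s) $$ (y,y)\<bar> \<le> \<gamma>}"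

text \<open>Eigenvalues of Q counted with algebraic multiplicity (roots of the characteristic
  polynomial; for symmetric real Q all of them are real).\<close>
definition eigs :: "real mat \<Rightarrow> real multiset" where
  "eigs Q = proots (char_poly Q)"

definition tr_abs_pow_below1 :: "real mat \<Rightarrow> nat \<Rightarrow> real" where
  "tr_abs_pow_below1 Q s = sum_mset (image_mset (\<lambda>q. \<bar>q\<bar> ^ s) (filter_mset (\<lambda>q. q < 1) (eigs Q)))"

end

theory Submission
  imports Defs
begin

text \<open>
  Both matrices are diagonal, with entries \<open>(Q d)\<^sub>i / N - c\<close> and \<open>d\<^sub>i / N - c\<close>, where
  \<open>d\<^sub>i = Q\<^sup>s(i,i)\<close> and \<open>c = tr(Q\<^sup>s) / N\<^sup>2\<close>. Since \<open>Q\<close> is symmetric it is doubly stochastic, and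
  averaging by a doubly stochastic matrix does not increase the \<open>\<ell>\<^sub>1\<close>-distance to a constant;
  this is the first inequality.

  For the spectral bound, write \<open>Q = U \<Lambda> U\<^sup>T\<close> with \<open>U\<close> orthogonal. Irreducibility makes 1
  a simple eigenvalue with a flat eigenvector, so \<open>d\<^sub>i - 1/N = \<Sum>\<^sub>k U(i,k)\<^sup>2 q\<^sub>k\<^sup>s\<close> and
  \<open>tr(Q\<^sup>s) - 1 = \<Sum>\<^sub>k q\<^sub>k\<^sup>s\<close>, both sums running over the eigenvalues \<open>q\<^sub>k < 1\<close>; each has
  \<open>\<ell>\<^sub>1\<close>-size at most \<open>tr(|Q|\<^sup>s; Q < 1)\<close>.

  For the bound through \<open>\<R>\<^sup>\<gamma>\<^sub>Q(x,s)\<close>, the values \<open>d\<^sub>i \<in> [0,1]\<close> are clipped to the window of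
  radius \<open>\<gamma>\<close> around \<open>d\<^sub>x\<close>: values confined to an interval of length \<open>2\<gamma>\<close> have mean absolute
  deviation at most \<open>\<gamma>\<close>, and clipping moves only the \<open>N - #\<R>\<close> values outside the window, each
  by at most 1.
\<close>

lemma index_mult_mat_sum:
  fixes X Y :: "'a::comm_semiring_0 mat"
  assumes "X \<in> carrier_mat r n" "Y \<in> carrier_mat n c" "i < r" "j < c"
  shows "(X * Y) $$ (i,j) = (\<Sum>k<n. X $$ (i,k) * Y $$ (k,j))"
  using assms by (simp add: scalar_prod_def atLeast0LessThan)

lemma mat_diag_pow: "mat_diag n f ^\<^sub>m k = mat_diag n (\<lambda>i. f i ^ k)"
  by (induction k) (simp_all add: carrier_matD[OF mat_diag_dim] power_Suc2 del: power_Suc)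

lemma proots_prod_linear_factors: "proots (\<Prod>a\<leftarrow>xs. [:- a, 1:]) = mset (xs :: 'a::idom list)"
proof (induction xs)
  case (Cons x xs)
  have "(\<Prod>a\<leftarrow>xs. [:- a, 1:]) \<noteq> (0::'a poly)" by (auto simp: prod_list_zero_iff)
  hence "proots ([:- x, 1:] * (\<Prod>a\<leftarrow>xs. [:- a, 1:])) = proots [:- x, 1:] + proots (\<Prod>a\<leftarrow>xs. [:- a, 1:])"
    by (intro proots_mult) auto
  with Cons.IH show ?case using proots_linear_factor[of "- x"] by simp
qed simp

lemma entry_norm_diagonal:
  assumes M: "M \<in> carrier_mat n n" and off: "\<And>i j. i < n \<Longrightarrow> j < n \<Longrightarrow> i \<noteq> j \<Longrightarrow> M $$ (i,j) = 0"
  shows "entry_norm M = (\<Sum>i<n. \<bar>M $$ (i,i)\<bar>)"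
proof -
  have "entry_norm M = (\<Sum>i<n. \<Sum>j<n. if j = i then \<bar>M $$ (i,i)\<bar> else 0)"
    unfolding entry_norm_def using M off by (intro sum.cong refl) auto
  thus ?thesis by simp
qed

lemma mdiag_carrier: "X \<in> carrier_mat a b \<Longrightarrow> mdiag X \<in> carrier_mat a b"
  unfolding mdiag_def carrier_mat_def by simp

lemma index_mdiag:
  "X \<in> carrier_mat a b \<Longrightarrow> i < a \<Longrightarrow> j < b \<Longrightarrow> mdiag X $$ (i,j) = (if i = j then X $$ (i,i) else 0)"
  unfolding mdiag_def carrier_mat_def by simp

lemma entry_norm_scaled_mdiag_shift:
  assumes P: "P \<in> carrier_mat n n"
  shows "entry_norm (r \<cdot>\<^sub>m mdiag P - c \<cdot>\<^sub>m 1\<^sub>m n) = (\<Sum>i<n. \<bar>r * P $$ (i,i) - c\<bar>)"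
  using mdiag_carrier[OF P] by (subst entry_norm_diagonal[of _ n]) (auto simp: index_mdiag[OF P])

lemma entry_norm_mdiag_average_shift:
  assumes Q: "Q \<in> carrier_mat n n" and P: "P \<in> carrier_mat n n"
  shows "entry_norm (mdiag (Q * mdiag P * Jmat n) - c \<cdot>\<^sub>m 1\<^sub>m n)
           = (\<Sum>i<n. \<bar>(\<Sum>k<n. Q $$ (i,k) * P $$ (k,k)) / n - c\<bar>)"
proof -
  have QP: "Q * mdiag P \<in> carrier_mat n n" and J: "Jmat n \<in> carrier_mat n n"
    using Q mdiag_carrier[OF P] by (auto simp: Jmat_def)
  have QPk: "(Q * mdiag P) $$ (i,k) = Q $$ (i,k) * P $$ (k,k)" if "i < n" "k < n" for i k
    using that
    by (simp add: index_mult_mat_sum[OF Q mdiag_carrier[OF P]] index_mdiag[OF P] if_distrib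
        cong: if_cong)
  have "(Q * mdiag P * Jmat n) $$ (i,i) = (\<Sum>k<n. Q $$ (i,k) * P $$ (k,k)) / n" if i: "i < n" for i
    by (subst index_mult_mat_sum[OF QP J i i]) (simp add: i QPk Jmat_def sum_divide_distrib)
  with mdiag_carrier[OF mult_carrier_mat[OF QP J]] show ?thesis
    by (subst entry_norm_diagonal[of _ n]) (auto simp: index_mdiag[OF mult_carrier_mat[OF QP J]])
qed

section \<open>Spectral theorem for real symmetric matrices\<close>

lemma hermitian_eigenvalue_real:
  fixes A :: "complex mat"
  assumes A: "A \<in> carrier_mat n n"
    and herm: "\<And>i j. i < n \<Longrightarrow> j < n \<Longrightarrow> A $$ (j,i) = cnj (A $$ (i,j))"
    and ev: "eigenvector A v a"
  shows "a \<in> \<real>"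
proof -
  have v: "v \<in> carrier_vec n" and v0: "v \<noteq> 0\<^sub>v n" and Av: "A *\<^sub>v v = a \<cdot>\<^sub>v v"
    using ev A unfolding eigenvector_def by auto
  have Av_i: "(\<Sum>j<n. A $$ (i,j) * v $ j) = a * v $ i" if "i < n" for i
    using arg_cong[OF Av, of "\<lambda>w. w $ i"] that A v
    by (simp add: scalar_prod_def atLeast0LessThan mult.commute)
  define z where "z = (\<Sum>i<n. \<Sum>j<n. cnj (v $ i) * A $$ (i,j) * v $ j)"
  define r where "r = (\<Sum>i<n. cnj (v $ i) * v $ i)"
  have z: "z = a * r"
    unfolding z_def r_def using Av_i
    by (simp add: mult.assoc flip: sum_distrib_left) (simp add: sum_distrib_left mult_ac)
  have "cnj z = (\<Sum>i<n. \<Sum>j<n. v $ i * cnj (A $$ (i,j)) * cnj (v $ j))"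
    unfolding z_def by simp
  also have "\<dots> = (\<Sum>j<n. \<Sum>i<n. v $ i * cnj (A $$ (i,j)) * cnj (v $ j))"
    by (rule sum.swap)
  also have "\<dots> = z"
    unfolding z_def by (intro sum.cong refl) (simp add: herm[symmetric] mult_ac)
  finally have z_real: "z \<in> \<real>" by (metis Reals_cnj_iff)
  define \<rho> where "\<rho> = (\<Sum>i<n. (cmod (v $ i))\<^sup>2)"
  have r_real: "r = of_real \<rho>"
    unfolding r_def \<rho>_def of_real_sum
    by (intro sum.cong refl) (subst complex_norm_square, simp add: mult.commute)
  obtain i0 where "i0 < n" "v $ i0 \<noteq> 0"
    using v0 v by (metis carrier_vecD eq_vecI index_zero_vec)
  hence "\<rho> > 0" unfolding \<rho>_def by (intro sum_pos2[of _ i0]) auto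
  with z r_real have "a = z / of_real \<rho>" by simp
  with z_real show ?thesis by (simp add: Reals_divide)
qed

lemma symmetric_real_mat_has_eigenvalue:
  fixes A :: "real mat"
  assumes A: "A \<in> carrier_mat n n" and sym: "transpose_mat A = A" and n: "n > 0"
  shows "\<exists>\<mu>. eigenvalue A \<mu>"
proof -
  define Ac where "Ac = map_mat complex_of_real A"
  have Ac: "Ac \<in> carrier_mat n n" using A by (simp add: Ac_def)
  obtain as where cp: "char_poly Ac = (\<Prod>a\<leftarrow>as. [:- a, 1:])" and "length as = n"
    using char_poly_factorized[OF Ac] by blast
  with n obtain a where "poly (char_poly Ac) a = 0" by (cases as) (auto simp: cp)
  then obtain v where ev: "eigenvector Ac v a"
    using eigenvalue_root_char_poly[OF Ac] unfolding eigenvalue_def by blast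
  have herm: "Ac $$ (j,i) = cnj (Ac $$ (i,j))" if "i < n" "j < n" for i j
    using that A arg_cong[OF sym, of "\<lambda>M. M $$ (i,j)"] by (simp add: Ac_def)
  obtain \<mu> where a: "a = of_real \<mu>"
    using hermitian_eigenvalue_real[OF Ac herm ev] by (auto elim: Reals_cases)
  have "of_real (poly (char_poly A) \<mu>) = poly (char_poly Ac) a"
    unfolding Ac_def of_real_hom.char_poly_hom[OF A] a by simp
  with \<open>poly (char_poly Ac) a = 0\<close> have "poly (char_poly A) \<mu> = 0" by simp
  thus ?thesis using eigenvalue_root_char_poly[OF A] by blast
qed

lemma householder_reflection:
  fixes u :: "real vec"
  assumes u: "u \<in> carrier_vec n" and unit: "u \<bullet> u = 1"
  shows "\<exists>H. H \<in> carrier_mat n n \<and> transpose_mat H = H \<and> H * H = 1\<^sub>m n \<and> col H 0 = u"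
proof -
  have unit': "(\<Sum>i<n. (u $ i)\<^sup>2) = 1"
    using unit u by (simp add: scalar_prod_def atLeast0LessThan power2_eq_square)
  hence n: "n > 0" by (cases n) auto
  define w where "w i = u $ i - of_bool (i = 0)" for i
  define c where "c = (\<Sum>i<n. (w i)\<^sup>2)"
  \<comment> \<open>\<open>H = I - 2 w w\<^sup>T / |w|\<^sup>2\<close> with \<open>w = u - e\<^sub>0\<close>; if \<open>u = e\<^sub>0\<close> then \<open>c = 0\<close>,
    so \<open>\<alpha> = 2 / 0 = 0\<close> and \<open>H = I\<close>, which is still correct.\<close>
  define \<alpha> where "\<alpha> = 2 / c"
  define H where "H = mat n n (\<lambda>(i,j). of_bool (i = j) - \<alpha> * w i * w j)"
  have c: "c = 2 - 2 * u $ 0"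
  proof -
    have "c = (\<Sum>i<n. (u $ i)\<^sup>2 + of_bool (i = 0) * (1 - 2 * u $ 0))"
      unfolding c_def w_def by (intro sum.cong refl) (auto simp: power2_eq_square algebra_simps)
    also have "\<dots> = 2 - 2 * u $ 0" using n unit' by (simp add: sum.distrib)
    finally show ?thesis .
  qed
  have H: "H \<in> carrier_mat n n" by (simp add: H_def)
  have "transpose_mat H = H" by (rule eq_matI) (auto simp: H_def)
  moreover have "H * H = 1\<^sub>m n"
  proof (rule eq_matI)
    fix i j assume "i < dim_row (1\<^sub>m n :: real mat)" "j < dim_col (1\<^sub>m n :: real mat)"
    hence i: "i < n" and j: "j < n" by auto
    have deltas: "{..<n} \<inter> {i} = {i}" "{..<n} \<inter> {j} = {j}" using i j by auto
    have "(H * H) $$ (i,j) = (\<Sum>k<n. of_bool (i = k) * of_bool (k = j)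
        - of_bool (i = k) * (\<alpha> * w k * w j) - of_bool (k = j) * (\<alpha> * w i * w k)
        + (\<alpha>\<^sup>2 * w i * w j) * (w k)\<^sup>2)"
      unfolding index_mult_mat_sum[OF H H i j] using i j
      by (intro sum.cong refl) (simp add: H_def algebra_simps power2_eq_square)
    also have "\<dots> = of_bool (i = j) - 2 * \<alpha> * w i * w j + \<alpha>\<^sup>2 * w i * w j * c"
      unfolding c_def by (simp add: deltas sum.distrib sum_subtractf sum_distrib_left[symmetric])
    also have "\<dots> = of_bool (i = j)"
      by (cases "c = 0") (simp_all add: \<alpha>_def power2_eq_square)
    finally show "(H * H) $$ (i,j) = 1\<^sub>m n $$ (i,j)" using i j by simp
  qed (use H in auto)
  moreover have "col H 0 = u"
  proof (rule eq_vecI)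
    fix i assume "i < dim_vec u"
    hence i: "i < n" using u by simp
    show "col H 0 $ i = u $ i"
    proof (cases "c = 0")
      case True
      hence "w i = 0"
        using i sum_nonneg_eq_0_iff[of "{..<n}" "\<lambda>i. (w i)\<^sup>2"] by (auto simp: c_def)
      thus ?thesis using i n True by (auto simp: H_def w_def \<alpha>_def)
    next
      case False
      have "\<alpha> * w 0 = -1" using c False by (simp add: \<alpha>_def w_def field_simps)
      hence "\<alpha> * w i * w 0 = - w i" by (metis mult.commute mult.left_commute mult_minus1_right)
      hence "H $$ (i,0) = of_bool (i = 0) + w i" using i n by (simp add: H_def)
      thus ?thesis using i n H by (simp add: w_def)
    qed
  qed (use H u in auto)
  ultimately show ?thesis using H by blast
qed

lemma symmetric_deflation:
  fixes A :: "real mat"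
  assumes A: "A \<in> carrier_mat (Suc m) (Suc m)" and sym: "transpose_mat A = A"
  obtains H \<mu> A'
  where "similar_mat_wit A (four_block_mat (mat 1 1 (\<lambda>_. \<mu>)) (0\<^sub>m 1 m) (0\<^sub>m m 1) A') H H"
    and "transpose_mat H = H" and "A' \<in> carrier_mat m m" and "transpose_mat A' = A'"
proof -
  define n where "n = Suc m"
  have A: "A \<in> carrier_mat n n" using A by (simp add: n_def)
  obtain \<mu> v where v: "v \<in> carrier_vec n" "v \<noteq> 0\<^sub>v n" and Av: "A *\<^sub>v v = \<mu> \<cdot>\<^sub>v v"
    using symmetric_real_mat_has_eigenvalue[OF A sym] A
    unfolding eigenvalue_def eigenvector_def n_def by auto
  have "v \<bullet> v > 0" using conjugate_square_greater_0_vec[OF v(1)] v(2) by simp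
  define u where "u = (1 / sqrt (v \<bullet> v)) \<cdot>\<^sub>v v"
  have u: "u \<in> carrier_vec n" using v by (simp add: u_def)
  have "u \<bullet> u = 1"
    using \<open>v \<bullet> v > 0\<close> v by (simp add: u_def smult_scalar_prod_distrib scalar_prod_smult_distrib)
  have Au: "A *\<^sub>v u = \<mu> \<cdot>\<^sub>v u"
    unfolding u_def using A v Av by (simp add: mult_mat_vec smult_smult_assoc mult.commute)
  obtain H where H: "H \<in> carrier_mat n n" and Ht: "transpose_mat H = H" and HH: "H * H = 1\<^sub>m n"
    and Hu: "col H 0 = u"
    using householder_reflection[OF u \<open>u \<bullet> u = 1\<close>] by blast
  \<comment> \<open>Conjugating by a reflection mapping \<open>e\<^sub>0\<close> to the eigenvector \<open>u\<close> turns the first column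
    into \<open>\<mu> e\<^sub>0\<close>, and by symmetry also the first row.\<close>
  define B where "B = H * A * H"
  have B: "B \<in> carrier_mat n n" using H A by (simp add: B_def)
  have "A = (H * H) * A * (H * H)" using HH A by simp
  also have "\<dots> = H * B * H"
    unfolding B_def using H A by (simp add: assoc_mult_mat[of _ n n _ n _ n])
  finally have sim: "similar_mat_wit A B H H" by (intro similar_mat_witI[OF HH HH _ A B H H])
  have "transpose_mat B = transpose_mat H * transpose_mat (H * A)"
    unfolding B_def using H A by (intro transpose_mult[of _ n n]) auto
  also have "\<dots> = H * (A * H)" using H A Ht sym by (simp add: transpose_mult[of _ n n])
  also have "\<dots> = B" unfolding B_def using H A by (simp add: assoc_mult_mat[of _ n n _ n _ n])
  finally have Bt: "transpose_mat B = B" .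
  have Bs: "B $$ (j,i) = B $$ (i,j)" if "i < n" "j < n" for i j
    using arg_cong[OF Bt, of "\<lambda>M. M $$ (i,j)"] B that by simp
  have B_col0: "B $$ (i,0) = of_bool (i = 0) * \<mu>" if i: "i < n" for i
  proof -
    have "B $$ (i,0) = row (H * A) i \<bullet> col H 0"
      unfolding B_def using H A i by (intro index_mult_mat(1)) (auto simp: n_def)
    also have "\<dots> = ((H * A) *\<^sub>v u) $ i"
      unfolding Hu using H i by (subst index_mult_mat_vec) auto
    also have "(H * A) *\<^sub>v u = H *\<^sub>v (A *\<^sub>v u)"
      using H A u by (rule assoc_mult_mat_vec)
    also have "(H *\<^sub>v (A *\<^sub>v u)) $ i = \<mu> * (row H i \<bullet> col H 0)"
      using H i u by (simp add: Au Hu mult_mat_vec)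
    also have "row H i \<bullet> col H 0 = of_bool (i = 0)"
      using arg_cong[OF HH, of "\<lambda>M. M $$ (i,0)"] H i by (simp add: n_def)
    finally show ?thesis by simp
  qed
  define A' where "A' = mat m m (\<lambda>(i,j). B $$ (Suc i, Suc j))"
  have B_block: "B = four_block_mat (mat 1 1 (\<lambda>_. \<mu>)) (0\<^sub>m 1 m) (0\<^sub>m m 1) A'"
  proof (rule eq_matI)
    fix i j assume "i < dim_row (four_block_mat (mat 1 1 (\<lambda>_. \<mu>)) (0\<^sub>m 1 m) (0\<^sub>m m 1) A')"
      "j < dim_col (four_block_mat (mat 1 1 (\<lambda>_. \<mu>)) (0\<^sub>m 1 m) (0\<^sub>m m 1) A')"
    hence i: "i < n" and j: "j < n" by (auto simp: A'_def n_def)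
    have "B $$ (0,j) = B $$ (j,0)" using Bs[OF j, of 0] by (simp add: n_def)
    thus "B $$ (i,j) = four_block_mat (mat 1 1 (\<lambda>_. \<mu>)) (0\<^sub>m 1 m) (0\<^sub>m m 1) A' $$ (i,j)"
      using i j B_col0 by (cases i; cases j) (auto simp: A'_def n_def)
  qed (use B in \<open>auto simp: A'_def n_def\<close>)
  show thesis
  proof (rule that)
    show "similar_mat_wit A (four_block_mat (mat 1 1 (\<lambda>_. \<mu>)) (0\<^sub>m 1 m) (0\<^sub>m m 1) A') H H"
      using sim B_block by simp
    show "transpose_mat A' = A'"
      by (rule eq_matI) (auto simp: A'_def n_def Bs)
  qed (auto simp: Ht A'_def)
qed

theorem real_symmetric_orthogonal_diagonalization:
  fixes A :: "real mat"
  assumes "A \<in> carrier_mat n n" and "transpose_mat A = A"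
  shows "\<exists>U lam. similar_mat_wit A (mat_diag n lam) U (transpose_mat U)"
  using assms
proof (induction n arbitrary: A)
  case 0
  hence "similar_mat_wit A (mat_diag 0 (\<lambda>_. 0)) (1\<^sub>m 0) (transpose_mat (1\<^sub>m 0))"
    by (intro similar_mat_witI[of _ _ 0]) (auto intro!: eq_matI)
  thus ?case by blast
next
  case (Suc m A)
  obtain H \<mu> A'
    where simAB: "similar_mat_wit A (four_block_mat (mat 1 1 (\<lambda>_. \<mu>)) (0\<^sub>m 1 m) (0\<^sub>m m 1) A') H H"
    and Ht: "transpose_mat H = H" and A': "A' \<in> carrier_mat m m" "transpose_mat A' = A'"
    using symmetric_deflation[OF Suc.prems] by blast
  obtain U' lam' where IH: "similar_mat_wit A' (mat_diag m lam') U' (transpose_mat U')"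
    using Suc.IH[OF A'] by blast
  have U': "U' \<in> carrier_mat m m" using similar_mat_witD2[OF A'(1) IH] by auto
  define U where "U = four_block_mat (1\<^sub>m 1) (0\<^sub>m 1 m) (0\<^sub>m m 1) U'"
  have U: "U \<in> carrier_mat (Suc m) (Suc m)"
    using four_block_carrier_mat[of "1\<^sub>m 1" 1 1 U' m m] U' by (simp add: U_def)
  have Ut: "transpose_mat U = four_block_mat (1\<^sub>m 1) (0\<^sub>m 1 m) (0\<^sub>m m 1) (transpose_mat U')"
    unfolding U_def using U' by (subst transpose_four_block_mat) auto
  have "similar_mat_wit (four_block_mat (mat 1 1 (\<lambda>_. \<mu>)) (0\<^sub>m 1 m) (0\<^sub>m m 1) A')
      (four_block_mat (mat 1 1 (\<lambda>_. \<mu>)) (0\<^sub>m 1 m) (0\<^sub>m m 1) (mat_diag m lam')) U (transpose_mat U)"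
    unfolding Ut unfolding U_def
    by (rule similar_mat_wit_four_block[OF similar_mat_wit_refl IH]) (use U' A'(1) in auto)
  also have "four_block_mat (mat 1 1 (\<lambda>_. \<mu>)) (0\<^sub>m 1 m) (0\<^sub>m m 1) (mat_diag m lam')
      = mat_diag (Suc m) (\<lambda>k. if k = 0 then \<mu> else lam' (k - 1))"
    by (rule eq_matI) (auto simp: mat_diag_def)
  finally have "similar_mat_wit A (mat_diag (Suc m) (\<lambda>k. if k = 0 then \<mu> else lam' (k - 1)))
      (H * U) (transpose_mat U * H)"
    by (rule similar_mat_wit_trans[OF simAB])
  moreover have "transpose_mat (H * U) = transpose_mat U * H"
    using similar_mat_witD2[OF Suc.prems(1) simAB] U Ht by (simp add: transpose_mult)
  ultimately show ?case by metis
qed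

section \<open>Orthogonal diagonalisations\<close>

locale orthogonal_diagonalization =
  fixes n :: nat and A U :: "real mat" and lam :: "nat \<Rightarrow> real"
  assumes wit: "similar_mat_wit A (mat_diag n lam) U (transpose_mat U)"
begin

lemma carrier: "A \<in> carrier_mat n n" "U \<in> carrier_mat n n"
  and orthogonal: "U * transpose_mat U = 1\<^sub>m n" "transpose_mat U * U = 1\<^sub>m n"
proof -
  have "n = dim_row A"
    using similar_mat_witD(5)[OF refl wit] by (metis carrier_matD(1) mat_diag_dim)
  from similar_mat_witD[OF this wit]
  show "A \<in> carrier_mat n n" "U \<in> carrier_mat n n" "U * transpose_mat U = 1\<^sub>m n"
    "transpose_mat U * U = 1\<^sub>m n" by (blast+)
qed

lemma columns_orthonormal: "k < n \<Longrightarrow> l < n \<Longrightarrow> (\<Sum>i<n. U $$ (i,k) * U $$ (i,l)) = of_bool (k = l)"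
  using arg_cong[OF orthogonal(2), of "\<lambda>M. M $$ (k,l)"] carrier
  by (simp add: scalar_prod_def atLeast0LessThan)

lemma rows_orthonormal: "i < n \<Longrightarrow> j < n \<Longrightarrow> (\<Sum>k<n. U $$ (i,k) * U $$ (j,k)) = of_bool (i = j)"
  using arg_cong[OF orthogonal(1), of "\<lambda>M. M $$ (i,j)"] carrier
  by (simp add: scalar_prod_def atLeast0LessThan)

lemma pow_entry:
  assumes i: "i < n" and j: "j < n"
  shows "(A ^\<^sub>m s) $$ (i,j) = (\<Sum>k<n. U $$ (i,k) * lam k ^ s * U $$ (j,k))"
proof -
  define D where "D = mat_diag n (\<lambda>k. lam k ^ s)"
  have D: "D \<in> carrier_mat n n" by (simp add: D_def)
  have eq: "A ^\<^sub>m s = U * D * transpose_mat U"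
    using similar_mat_wit_pow_id[OF wit] by (simp add: mat_diag_pow D_def)
  have "(A ^\<^sub>m s) $$ (i,j) = (\<Sum>k<n. (U * D) $$ (i,k) * transpose_mat U $$ (k,j))"
    unfolding eq by (rule index_mult_mat_sum[OF _ _ i j]) (use carrier D in auto)
  also have "\<dots> = (\<Sum>k<n. U $$ (i,k) * lam k ^ s * U $$ (j,k))"
    using carrier i j by (intro sum.cong refl) (simp add: D_def mat_diag_mult_right[of _ n n])
  finally show ?thesis .
qed

lemma entry: "i < n \<Longrightarrow> j < n \<Longrightarrow> A $$ (i,j) = (\<Sum>k<n. U $$ (i,k) * lam k * U $$ (j,k))"
  using pow_entry[of i j 1] carrier by simp

lemma column_eigenvector:
  assumes "i < n" "k < n"
  shows "(\<Sum>j<n. A $$ (i,j) * U $$ (j,k)) = lam k * U $$ (i,k)"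
proof -
  have "(\<Sum>j<n. A $$ (i,j) * U $$ (j,k))
      = (\<Sum>j<n. \<Sum>l<n. U $$ (i,l) * lam l * (U $$ (j,l) * U $$ (j,k)))"
    using assms by (simp add: entry sum_distrib_right mult.assoc)
  also have "\<dots> = (\<Sum>l<n. U $$ (i,l) * lam l * (\<Sum>j<n. U $$ (j,l) * U $$ (j,k)))"
    by (subst sum.swap) (simp add: sum_distrib_left)
  also have "\<dots> = lam k * U $$ (i,k)"
    using assms by (simp add: columns_orthonormal)
  finally show ?thesis .
qed

lemma eigs_eq: "eigs A = mset (map lam [0..<n])"
proof -
  have "char_poly A = char_poly (mat_diag n lam)"
    using wit by (intro char_poly_similar) (auto simp: similar_mat_def)
  also have "\<dots> = (\<Prod>a\<leftarrow>diag_mat (mat_diag n lam). [:- a, 1:])"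
    by (subst char_poly_upper_triangular[of _ n]) (auto simp: upper_triangular_def mat_diag_def)
  also have "diag_mat (mat_diag n lam) = map lam [0..<n]"
    unfolding diag_mat_def by (intro map_cong) (auto simp: mat_diag_def)
  finally show ?thesis unfolding eigs_def by (simp only: proots_prod_linear_factors)
qed

end

section \<open>Stochastic matrices\<close>

lemma stochasticD:
  assumes "stochastic N Q"
  shows "Q \<in> carrier_mat N N" "\<And>i j. i < N \<Longrightarrow> j < N \<Longrightarrow> Q $$ (i,j) \<ge> 0"
    "\<And>i. i < N \<Longrightarrow> (\<Sum>j<N. Q $$ (i,j)) = 1"
  using assms unfolding stochastic_def by auto

lemma stochastic_one: "stochastic N (1\<^sub>m N)"
  unfolding stochastic_def by (simp add: of_bool_def[symmetric])

lemma stochastic_mult: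
  assumes P: "stochastic N P" and Q: "stochastic N Q"
  shows "stochastic N (P * Q)"
proof -
  note P' = stochasticD[OF P] and Q' = stochasticD[OF Q]
  have entry: "(P * Q) $$ (i,j) = (\<Sum>k<N. P $$ (i,k) * Q $$ (k,j))" if "i < N" "j < N" for i j
    using index_mult_mat_sum[OF P'(1) Q'(1) that] .
  have "(\<Sum>j<N. (P * Q) $$ (i,j)) = 1" if i: "i < N" for i
  proof -
    have "(\<Sum>j<N. (P * Q) $$ (i,j)) = (\<Sum>j<N. \<Sum>k<N. P $$ (i,k) * Q $$ (k,j))"
      using i by (simp add: entry)
    also have "\<dots> = (\<Sum>k<N. P $$ (i,k) * (\<Sum>j<N. Q $$ (k,j)))"
      by (subst sum.swap) (simp add: sum_distrib_left)
    also have "\<dots> = 1" using i P'(3) Q'(3) by simp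
    finally show ?thesis .
  qed
  moreover have "(P * Q) $$ (i,j) \<ge> 0" if "i < N" "j < N" for i j
    using that P'(2) Q'(2) by (auto simp: entry intro!: sum_nonneg)
  ultimately show ?thesis using P'(1) Q'(1) unfolding stochastic_def by auto
qed

lemma stochastic_pow:
  assumes "stochastic N Q"
  shows "stochastic N (Q ^\<^sub>m s)"
  using stochasticD(1)[OF assms]
  by (induction s) (simp_all add: assms stochastic_one stochastic_mult)

lemma stochastic_entry_le_1:
  assumes st: "stochastic N Q" and i: "i < N" and j: "j < N"
  shows "Q $$ (i,j) \<le> 1"
proof -
  have "Q $$ (i,j) \<le> (\<Sum>k<N. Q $$ (i,k))"
    using j stochasticD(2)[OF st i] by (intro member_le_sum) auto
  thus ?thesis using stochasticD(3)[OF st i] by simp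
qed

lemma stochastic_pow_Suc_pos:
  assumes st: "stochastic N Q" and i: "i < N" and l: "l < N" and pos: "(Q ^\<^sub>m Suc m) $$ (i,l) > 0"
  obtains k where "k < N" "(Q ^\<^sub>m m) $$ (i,k) > 0" "Q $$ (k,l) > 0"
proof -
  note Q = stochasticD[OF st] and P = stochasticD[OF stochastic_pow[OF st, of m]]
  have "0 < (\<Sum>k<N. (Q ^\<^sub>m m) $$ (i,k) * Q $$ (k,l))"
    using pos index_mult_mat_sum[OF P(1) Q(1) i l] by simp
  then obtain k where k: "k < N" "(Q ^\<^sub>m m) $$ (i,k) * Q $$ (k,l) > 0"
    by (metis (no_types, lifting) lessThan_iff not_less sum_nonpos)
  moreover have "(Q ^\<^sub>m m) $$ (i,k) \<ge> 0" "Q $$ (k,l) \<ge> 0" using P(2) Q(2) i k l by auto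
  ultimately show thesis using that by (auto simp: zero_less_mult_iff)
qed

text \<open>Maximum principle: \<open>u\<close> at a maximiser is a \<open>Q\<close>-average of values of \<open>u\<close>, so every
  state reachable from a maximiser in one step is again a maximiser; by irreducibility every
  state is reachable.\<close>

lemma irreducible_stochastic_harmonic_const:
  fixes u :: "nat \<Rightarrow> real"
  assumes st: "stochastic N Q" and irr: "irreducible_mat N Q"
    and harmonic: "\<And>i. i < N \<Longrightarrow> (\<Sum>j<N. Q $$ (i,j) * u j) = u i"
    and i: "i < N" and j: "j < N"
  shows "u i = u j"
proof -
  note Q = stochasticD[OF st]
  define M where "M = Max (u ` {..<N})"
  have le_M: "u k \<le> M" if "k < N" for k unfolding M_def using that by (intro Max_ge) auto
  obtain i0 where i0: "i0 < N" "u i0 = M"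
    unfolding M_def using i Max_in[of "u ` {..<N}"] by fastforce
  have edge: "u l = M" if kl: "k < N" "l < N" and "u k = M" "Q $$ (k,l) > 0" for k l
  proof -
    have "(\<Sum>j<N. Q $$ (k,j) * (M - u j)) = M * (\<Sum>j<N. Q $$ (k,j)) - (\<Sum>j<N. Q $$ (k,j) * u j)"
      by (simp add: sum_subtractf sum_distrib_left algebra_simps)
    also have "\<dots> = 0" using Q(3)[OF kl(1)] harmonic[OF kl(1)] \<open>u k = M\<close> by simp
    finally have "(\<Sum>j<N. Q $$ (k,j) * (M - u j)) = 0" .
    moreover have "\<forall>j\<in>{..<N}. Q $$ (k,j) * (M - u j) \<ge> 0" using Q(2) le_M kl by auto
    ultimately have "Q $$ (k,l) * (M - u l) = 0"
      using kl sum_nonneg_eq_0_iff[of "{..<N}" "\<lambda>j. Q $$ (k,j) * (M - u j)"] by simp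
    thus ?thesis using \<open>Q $$ (k,l) > 0\<close> by simp
  qed
  have reach: "u l = M" if "l < N" "(Q ^\<^sub>m m) $$ (i0,l) > 0" for m l
    using that
  proof (induction m arbitrary: l)
    case 0 thus ?case using i0 Q(1) by (auto split: if_splits)
  next
    case (Suc m)
    then obtain k where "k < N" "(Q ^\<^sub>m m) $$ (i0,k) > 0" "Q $$ (k,l) > 0"
      using stochastic_pow_Suc_pos[OF st i0(1)] by blast
    with Suc edge show ?case by blast
  qed
  have "u l = M" if "l < N" for l
    using irr i0(1) that reach unfolding irreducible_mat_def by blast
  thus ?thesis using i j by simp
qed

lemma stochastic_eigenvalue_abs_le_1:
  fixes u :: "nat \<Rightarrow> real"
  assumes st: "stochastic N Q"
    and eigen: "\<And>i. i < N \<Longrightarrow> (\<Sum>j<N. Q $$ (i,j) * u j) = \<mu> * u i"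
    and nz: "i1 < N" "u i1 \<noteq> 0"
  shows "\<bar>\<mu>\<bar> \<le> 1"
proof -
  note Q = stochasticD[OF st]
  define M where "M = Max ((\<lambda>k. \<bar>u k\<bar>) ` {..<N})"
  have le_M: "\<bar>u k\<bar> \<le> M" if "k < N" for k unfolding M_def using that by (intro Max_ge) auto
  obtain i where i: "i < N" "\<bar>u i\<bar> = M"
    unfolding M_def using nz Max_in[of "(\<lambda>k. \<bar>u k\<bar>) ` {..<N}"] by fastforce
  have "M > 0" using le_M[OF nz(1)] nz by simp
  have "\<bar>\<mu>\<bar> * M = \<bar>\<Sum>j<N. Q $$ (i,j) * u j\<bar>" using eigen i by (simp add: abs_mult)
  also have "\<dots> \<le> (\<Sum>j<N. Q $$ (i,j) * M)"
    by (rule order_trans[OF sum_abs sum_mono])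
      (use Q(2) i le_M in \<open>auto simp: abs_mult intro: mult_left_mono\<close>)
  also have "\<dots> = M" using Q(3) i by (simp flip: sum_distrib_right)
  finally show ?thesis using \<open>M > 0\<close> by (simp add: mult_le_cancel_right_pos)
qed

lemma doubly_stochastic_abs_dev_le:
  fixes x :: "nat \<Rightarrow> real"
  assumes st: "stochastic n Q" and col: "\<And>k. k < n \<Longrightarrow> (\<Sum>i<n. Q $$ (i,k)) = 1"
  shows "(\<Sum>i<n. \<bar>(\<Sum>k<n. Q $$ (i,k) * x k) - c\<bar>) \<le> (\<Sum>k<n. \<bar>x k - c\<bar>)"
proof -
  note Q = stochasticD[OF st]
  have "\<bar>(\<Sum>k<n. Q $$ (i,k) * x k) - c\<bar> \<le> (\<Sum>k<n. Q $$ (i,k) * \<bar>x k - c\<bar>)" if i: "i < n" for i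
  proof -
    have "(\<Sum>k<n. Q $$ (i,k) * x k) - c = (\<Sum>k<n. Q $$ (i,k) * (x k - c))"
      using Q(3)[OF i] by (simp add: right_diff_distrib sum_subtractf flip: sum_distrib_right)
    also have "\<bar>\<dots>\<bar> \<le> (\<Sum>k<n. Q $$ (i,k) * \<bar>x k - c\<bar>)"
      by (rule order_trans[OF sum_abs]) (use Q(2) i in \<open>simp add: abs_mult\<close>)
    finally show ?thesis .
  qed
  hence "(\<Sum>i<n. \<bar>(\<Sum>k<n. Q $$ (i,k) * x k) - c\<bar>) \<le> (\<Sum>i<n. \<Sum>k<n. Q $$ (i,k) * \<bar>x k - c\<bar>)"
    by (intro sum_mono) simp
  also have "\<dots> = (\<Sum>k<n. (\<Sum>i<n. Q $$ (i,k)) * \<bar>x k - c\<bar>)"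
    by (subst sum.swap) (simp add: sum_distrib_right)
  also have "\<dots> = (\<Sum>k<n. \<bar>x k - c\<bar>)" using col by simp
  finally show ?thesis .
qed

section \<open>Mean absolute deviation\<close>

lemma sum_abs_dev_shift:
  fixes d :: "nat \<Rightarrow> real"
  assumes "n > 0"
  shows "(\<Sum>i<n. \<bar>d i - t / n\<bar>) \<le> (\<Sum>i<n. \<bar>d i - c / n\<bar>) + \<bar>t - c\<bar>"
proof -
  have "(\<Sum>i<n. \<bar>d i - t / n\<bar>) \<le> (\<Sum>i<n. \<bar>d i - c / n\<bar> + \<bar>t - c\<bar> / n)"
  proof (rule sum_mono)
    fix i
    have "\<bar>c / n - t / n\<bar> = \<bar>t - c\<bar> / n" by (simp add: abs_minus_commute flip: diff_divide_distrib)
    thus "\<bar>d i - t / n\<bar> \<le> \<bar>d i - c / n\<bar> + \<bar>t - c\<bar> / n" by linarith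
  qed
  also have "\<dots> = (\<Sum>i<n. \<bar>d i - c / n\<bar>) + \<bar>t - c\<bar>" using assms by (simp add: sum.distrib)
  finally show ?thesis .
qed

lemma abs_dev_interval_bound:
  fixes a b x m :: real
  assumes "a \<le> x" "x \<le> b" "a \<le> m" "m \<le> b"
  shows "(b - a) * \<bar>x - m\<bar> \<le> (b - x) * (m - a) + (x - a) * (b - m)"
proof (cases "m \<le> x")
  case True
  have "(b - x) * (m - a) + (x - a) * (b - m) - (b - a) * (x - m) = 2 * ((b - x) * (m - a))"
    by (simp add: algebra_simps)
  moreover have "(b - x) * (m - a) \<ge> 0" using assms by simp
  moreover have "(b - a) * \<bar>x - m\<bar> = (b - a) * (x - m)" using True by simp
  ultimately show ?thesis by linarith
next
  case False
  have "(b - x) * (m - a) + (x - a) * (b - m) - (b - a) * (m - x) = 2 * ((x - a) * (b - m))"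
    by (simp add: algebra_simps)
  moreover have "(x - a) * (b - m) \<ge> 0" using assms by simp
  moreover have "(b - a) * \<bar>x - m\<bar> = (b - a) * (m - x)" using False by simp
  ultimately show ?thesis by linarith
qed

lemma interval_product_le:
  fixes a b m :: real
  shows "4 * ((m - a) * (b - m)) \<le> (b - a)\<^sup>2"
proof -
  have "(b - a)\<^sup>2 - 4 * ((m - a) * (b - m)) = (a + b - 2 * m)\<^sup>2"
    by (simp add: power2_eq_square algebra_simps)
  thus ?thesis by (metis diff_ge_0_iff_ge zero_le_power2)
qed

lemma sum_abs_dev_mean_le_interval:
  fixes e :: "nat \<Rightarrow> real"
  assumes n: "n > 0" and ab: "\<And>i. i < n \<Longrightarrow> a \<le> e i \<and> e i \<le> b"
  shows "(\<Sum>i<n. \<bar>e i - (\<Sum>j<n. e j) / n\<bar>) \<le> n * (b - a) / 2"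
proof -
  define S where "S = (\<Sum>j<n. e j)"
  define m where "m = S / n"
  have S: "S = n * m" using n by (simp add: m_def)
  have "n * a \<le> S" "S \<le> n * b"
    unfolding S_def using sum_mono[of "{..<n}" "\<lambda>_. a" e] sum_mono[of "{..<n}" e "\<lambda>_. b"] ab by auto
  hence m: "a \<le> m" "m \<le> b" using n S by (simp_all add: mult_le_cancel_left_pos)
  have "(b - a) * (\<Sum>i<n. \<bar>e i - m\<bar>) \<le> (\<Sum>i<n. (b - e i) * (m - a) + (e i - a) * (b - m))"
    unfolding sum_distrib_left using ab m by (intro sum_mono abs_dev_interval_bound) auto
  also have "\<dots> = (\<Sum>i<n. b - e i) * (m - a) + (\<Sum>i<n. e i - a) * (b - m)"
    by (simp add: sum.distrib sum_distrib_right)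
  also have "\<dots> = (n * b - S) * (m - a) + (S - n * a) * (b - m)"
    by (simp add: S_def sum_subtractf)
  also have "\<dots> = 2 * n * ((m - a) * (b - m))" by (simp add: S algebra_simps)
  also have "\<dots> \<le> (b - a) * (n * (b - a) / 2)"
  proof -
    have "n / 2 * (4 * ((m - a) * (b - m))) \<le> n / 2 * (b - a)\<^sup>2"
      by (rule mult_left_mono[OF interval_product_le]) simp
    moreover have "2 * n * ((m - a) * (b - m)) = n / 2 * (4 * ((m - a) * (b - m)))" by simp
    moreover have "n / 2 * (b - a)\<^sup>2 = (b - a) * (n * (b - a) / 2)" by (simp add: power2_eq_square)
    ultimately show ?thesis by linarith
  qed
  finally have le: "(b - a) * (\<Sum>i<n. \<bar>e i - m\<bar>) \<le> (b - a) * (n * (b - a) / 2)" .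
  show ?thesis
  proof (cases "a < b")
    case True
    with le show ?thesis unfolding m_def S_def by (simp add: mult_le_cancel_left_pos)
  next
    case False
    have "e i = m" if "i < n" for i using ab[OF that] m False by linarith
    hence "(\<Sum>i<n. \<bar>e i - m\<bar>) = 0" by simp
    with False m show ?thesis unfolding m_def S_def by simp
  qed
qed

lemma sum_abs_dev_mean_perturb:
  fixes d e :: "nat \<Rightarrow> real"
  assumes n: "n > 0"
  shows "(\<Sum>i<n. \<bar>d i - (\<Sum>j<n. d j) / n\<bar>)
           \<le> (\<Sum>i<n. \<bar>e i - (\<Sum>j<n. e j) / n\<bar>) + 2 * (\<Sum>i<n. \<bar>d i - e i\<bar>)"
proof -
  define md me where "md = (\<Sum>j<n. d j) / n" and "me = (\<Sum>j<n. e j) / n"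
  have "n * (me - md) = (\<Sum>j<n. e j - d j)"
    using n by (simp add: md_def me_def sum_subtractf field_simps)
  hence "n * \<bar>me - md\<bar> = \<bar>\<Sum>j<n. e j - d j\<bar>" by (metis abs_mult abs_of_nat)
  also have "\<dots> \<le> (\<Sum>i<n. \<bar>d i - e i\<bar>)"
    by (rule order_trans[OF sum_abs]) (simp add: abs_minus_commute)
  finally have mean: "n * \<bar>me - md\<bar> \<le> (\<Sum>i<n. \<bar>d i - e i\<bar>)" .
  have "(\<Sum>i<n. \<bar>d i - md\<bar>) \<le> (\<Sum>i<n. \<bar>d i - e i\<bar> + \<bar>e i - me\<bar> + \<bar>me - md\<bar>)"
    by (rule sum_mono) linarith
  also have "\<dots> = (\<Sum>i<n. \<bar>d i - e i\<bar>) + (\<Sum>i<n. \<bar>e i - me\<bar>) + n * \<bar>me - md\<bar>"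
    by (simp add: sum.distrib)
  finally show ?thesis using mean unfolding md_def me_def by linarith
qed

lemma sum_abs_dev_mean_le_near_count:
  fixes d :: "nat \<Rightarrow> real"
  assumes n: "n > 0" and d01: "\<And>i. i < n \<Longrightarrow> 0 \<le> d i \<and> d i \<le> 1" and x: "x < n" and \<gamma>: "\<gamma> \<ge> 0"
  shows "(\<Sum>i<n. \<bar>d i - (\<Sum>j<n. d j) / n\<bar>)
           \<le> 2 * (real n - card {y. y < n \<and> \<bar>d x - d y\<bar> \<le> \<gamma>}) + n * \<gamma>"
proof -
  define R where "R = {y. y < n \<and> \<bar>d x - d y\<bar> \<le> \<gamma>}"
  define e where "e i = max (d x - \<gamma>) (min (d x + \<gamma>) (d i))" for i
  have clip: "\<bar>d i - e i\<bar> \<le> of_bool (i \<notin> R)" if i: "i < n" for i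
  proof (cases "i \<in> R")
    case True thus ?thesis by (auto simp: R_def e_def)
  next
    case False
    have "\<bar>d i - e i\<bar> \<le> \<bar>d i - d x\<bar>" using \<gamma> by (auto simp: e_def)
    also have "\<dots> \<le> 1" using d01[OF i] d01[OF x] by linarith
    finally show ?thesis using False by simp
  qed
  have "(\<Sum>i<n. \<bar>d i - e i\<bar>) \<le> (\<Sum>i<n. of_bool (i \<notin> R))"
    using clip by (intro sum_mono) auto
  also have "\<dots> = real n - card R"
  proof -
    have R: "R \<subseteq> {..<n}" by (auto simp: R_def)
    hence "card ({..<n} - R) = n - card R" "card R \<le> n"
      using card_mono[OF _ R] by (simp_all add: card_Diff_subset finite_subset)
    moreover have "{..<n} \<inter> {i. i \<notin> R} = {..<n} - R" by auto
    ultimately show ?thesis by (simp add: of_nat_diff)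
  qed
  finally have "(\<Sum>i<n. \<bar>d i - e i\<bar>) \<le> real n - card R" .
  moreover have "(\<Sum>i<n. \<bar>e i - (\<Sum>j<n. e j) / n\<bar>) \<le> n * ((d x + \<gamma>) - (d x - \<gamma>)) / 2"
    using \<gamma> by (intro sum_abs_dev_mean_le_interval[OF n]) (auto simp: e_def)
  ultimately show ?thesis
    using sum_abs_dev_mean_perturb[OF n, of d e] unfolding R_def by simp
qed

section \<open>Spectrum of a symmetric irreducible stochastic matrix\<close>

context orthogonal_diagonalization
begin

lemma symmetric: "i < n \<Longrightarrow> j < n \<Longrightarrow> A $$ (j,i) = A $$ (i,j)"
  by (simp add: entry mult_ac)

lemma column_norm: "k < n \<Longrightarrow> (\<Sum>i<n. (U $$ (i,k))\<^sup>2) = 1"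
  using columns_orthonormal[of k k] by (simp add: power2_eq_square)

lemma diag_pow: "i < n \<Longrightarrow> (A ^\<^sub>m s) $$ (i,i) = (\<Sum>k<n. (U $$ (i,k))\<^sup>2 * lam k ^ s)"
  by (simp add: pow_entry power2_eq_square mult_ac)

lemma trace_pow: "mtrace (A ^\<^sub>m s) = (\<Sum>k<n. lam k ^ s)"
proof -
  have "mtrace (A ^\<^sub>m s) = (\<Sum>i<n. \<Sum>k<n. (U $$ (i,k))\<^sup>2 * lam k ^ s)"
    unfolding mtrace_def using carrier by (simp add: diag_pow)
  also have "\<dots> = (\<Sum>k<n. lam k ^ s * (\<Sum>i<n. (U $$ (i,k))\<^sup>2))"
    by (subst sum.swap) (simp add: sum_distrib_left mult_ac)
  also have "\<dots> = (\<Sum>k<n. lam k ^ s)" by (simp add: column_norm)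
  finally show ?thesis .
qed

lemma tr_abs_pow_below1_eq: "tr_abs_pow_below1 A s = (\<Sum>k | k < n \<and> lam k < 1. \<bar>lam k\<bar> ^ s)"
proof -
  have "tr_abs_pow_below1 A s = sum_list (map (\<lambda>k. \<bar>lam k\<bar> ^ s) (filter (\<lambda>k. lam k < 1) [0..<n]))"
    unfolding tr_abs_pow_below1_def eigs_eq
    by (simp only: mset_filter[symmetric] mset_map[symmetric] sum_mset_sum_list)
      (simp add: filter_map o_def)
  also have "\<dots> = (\<Sum>k | k < n \<and> lam k < 1. \<bar>lam k\<bar> ^ s)"
    by (subst sum_list_distinct_conv_sum_set) (auto intro: sum.cong)
  finally show ?thesis .
qed

lemma eigenvalue_le_1:
  assumes st: "stochastic n A" and k: "k < n"
  shows "lam k \<le> 1"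
proof -
  have "\<exists>i<n. U $$ (i,k) \<noteq> 0"
  proof (rule ccontr)
    assume "\<not> (\<exists>i<n. U $$ (i,k) \<noteq> 0)"
    hence "(\<Sum>i<n. (U $$ (i,k))\<^sup>2) = 0" by simp
    with column_norm[OF k] show False by simp
  qed
  then obtain i where "i < n" "U $$ (i,k) \<noteq> 0" by blast
  hence "\<bar>lam k\<bar> \<le> 1"
    by (intro stochastic_eigenvalue_abs_le_1[OF st _ _ _, of "\<lambda>j. U $$ (j,k)" _ i])
      (auto simp: column_eigenvector k)
  thus ?thesis by simp
qed

lemma eigenvalue_one_exists:
  assumes st: "stochastic n A" and n: "n > 0"
  shows "\<exists>k<n. lam k = 1"
proof -
  note stoch = stochasticD[OF st]
  define w where "w k = (\<Sum>i<n. U $$ (i,k))" for k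
  have fixed: "lam k * w k = w k" if k: "k < n" for k
  proof -
    have "lam k * w k = (\<Sum>i<n. \<Sum>j<n. A $$ (i,j) * U $$ (j,k))"
      unfolding w_def sum_distrib_left using k by (simp add: column_eigenvector)
    also have "\<dots> = (\<Sum>j<n. U $$ (j,k) * (\<Sum>i<n. A $$ (j,i)))"
      by (subst sum.swap) (simp add: sum_distrib_left mult_ac symmetric)
    also have "\<dots> = w k" unfolding w_def using stoch(3) by simp
    finally show ?thesis .
  qed
  have "(\<Sum>k<n. w k * U $$ (0,k)) = (\<Sum>i<n. \<Sum>k<n. U $$ (i,k) * U $$ (0,k))"
    unfolding w_def sum_distrib_right by (rule sum.swap)
  also have "\<dots> = 1" using n by (simp add: rows_orthonormal)
  finally have "\<exists>k<n. w k \<noteq> 0"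
    by (rule contrapos_pp) simp
  with fixed show ?thesis by auto
qed

lemma top_eigenvector_const:
  assumes st: "stochastic n A" and irr: "irreducible_mat n A"
    and k: "k < n" and top: "lam k = 1" and i: "i < n"
  shows "U $$ (i,k) = U $$ (0,k)"
  using irreducible_stochastic_harmonic_const[OF st irr, of "\<lambda>j. U $$ (j,k)" i 0] i
  by (simp add: column_eigenvector k top)

lemma top_eigenvalue_unique:
  assumes st: "stochastic n A" and irr: "irreducible_mat n A"
    and kl: "k < n" "l < n" and top: "lam k = 1" "lam l = 1"
  shows "k = l"
proof (rule ccontr)
  assume "k \<noteq> l"
  have n: "n > 0" using kl by simp
  have const: "U $$ (i,k) = U $$ (0,k)" "U $$ (i,l) = U $$ (0,l)" if "i < n" for i
    using top_eigenvector_const[OF st irr _ _ that] kl top by auto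
  have "0 = (\<Sum>i<n. U $$ (i,k) * U $$ (i,l))"
    using columns_orthonormal[OF kl] \<open>k \<noteq> l\<close> by simp
  also have "\<dots> = (\<Sum>i<n. U $$ (0,k) * U $$ (0,l))"
    by (intro sum.cong refl) (metis lessThan_iff const)
  finally have "n * (U $$ (0,k) * U $$ (0,l)) = 0" by simp
  moreover have "(\<Sum>i<n. (U $$ (i,m))\<^sup>2) = (\<Sum>i<n. (U $$ (0,m))\<^sup>2)" if "m \<in> {k,l}" for m
    by (intro sum.cong refl) (use that const in \<open>metis empty_iff insert_iff lessThan_iff\<close>)
  hence "n * (U $$ (0,k))\<^sup>2 = 1" "n * (U $$ (0,l))\<^sup>2 = 1"
    using column_norm[OF kl(1)] column_norm[OF kl(2)] by simp_all
  ultimately show False by (auto simp: power2_eq_square)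
qed

lemma top_eigenvector_sq:
  assumes st: "stochastic n A" and irr: "irreducible_mat n A"
    and k: "k < n" and top: "lam k = 1" and i: "i < n"
  shows "(U $$ (i,k))\<^sup>2 = 1 / n"
proof -
  have const: "U $$ (j,k) = U $$ (0,k)" if "j < n" for j
    using top_eigenvector_const[OF st irr k top that] .
  have "1 = (\<Sum>j<n. (U $$ (0,k))\<^sup>2)"
    unfolding column_norm[OF k, symmetric] by (intro sum.cong refl) (metis lessThan_iff const)
  thus ?thesis using const[OF i] i by (simp add: field_simps)
qed

lemma diag_pow_deviation_from_uniform:
  assumes st: "stochastic n A" and irr: "irreducible_mat n A" and k0: "k0 < n" "lam k0 = 1"
  shows "(\<Sum>i<n. \<bar>(A ^\<^sub>m s) $$ (i,i) - 1 / n\<bar>) \<le> (\<Sum>k\<in>{..<n} - {k0}. \<bar>lam k\<bar> ^ s)"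
proof -
  let ?K = "{..<n} - {k0}"
  have "\<bar>(A ^\<^sub>m s) $$ (i,i) - 1 / n\<bar> \<le> (\<Sum>k\<in>?K. (U $$ (i,k))\<^sup>2 * \<bar>lam k\<bar> ^ s)" if i: "i < n" for i
  proof -
    have "(A ^\<^sub>m s) $$ (i,i) = (U $$ (i,k0))\<^sup>2 * lam k0 ^ s + (\<Sum>k\<in>?K. (U $$ (i,k))\<^sup>2 * lam k ^ s)"
      using diag_pow[OF i] sum.remove[of "{..<n}" k0 "\<lambda>k. (U $$ (i,k))\<^sup>2 * lam k ^ s"] k0 by simp
    hence "(A ^\<^sub>m s) $$ (i,i) - 1 / n = (\<Sum>k\<in>?K. (U $$ (i,k))\<^sup>2 * lam k ^ s)"
      using top_eigenvector_sq[OF st irr k0 i] k0 by simp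
    also have "\<bar>\<dots>\<bar> \<le> (\<Sum>k\<in>?K. (U $$ (i,k))\<^sup>2 * \<bar>lam k\<bar> ^ s)"
      by (rule order_trans[OF sum_abs]) (simp add: abs_mult power_abs)
    finally show ?thesis .
  qed
  hence "(\<Sum>i<n. \<bar>(A ^\<^sub>m s) $$ (i,i) - 1 / n\<bar>) \<le> (\<Sum>i<n. \<Sum>k\<in>?K. (U $$ (i,k))\<^sup>2 * \<bar>lam k\<bar> ^ s)"
    by (intro sum_mono) simp
  also have "\<dots> = (\<Sum>k\<in>?K. \<bar>lam k\<bar> ^ s * (\<Sum>i<n. (U $$ (i,k))\<^sup>2))"
    by (subst sum.swap) (simp add: sum_distrib_left mult_ac)
  also have "\<dots> = (\<Sum>k\<in>?K. \<bar>lam k\<bar> ^ s)" by (simp add: column_norm)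
  finally show ?thesis .
qed

theorem diag_pow_deviation_le:
  assumes st: "stochastic n A" and irr: "irreducible_mat n A" and n: "n > 0"
  shows "(\<Sum>i<n. \<bar>(A ^\<^sub>m s) $$ (i,i) - mtrace (A ^\<^sub>m s) / n\<bar>) \<le> 2 * tr_abs_pow_below1 A s"
proof -
  obtain k0 where k0: "k0 < n" "lam k0 = 1" using eigenvalue_one_exists[OF st n] by blast
  let ?K = "{..<n} - {k0}"
  have "?K \<subseteq> {k. k < n \<and> lam k < 1}"
  proof
    fix k assume "k \<in> ?K"
    hence "k < n" "k \<noteq> k0" by auto
    thus "k \<in> {k. k < n \<and> lam k < 1}"
      using eigenvalue_le_1[OF st \<open>k < n\<close>] top_eigenvalue_unique[OF st irr \<open>k < n\<close> k0(1) _ k0(2)]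
      by force
  qed
  moreover have "{k. k < n \<and> lam k < 1} \<subseteq> ?K" using k0 by auto
  ultimately have "{k. k < n \<and> lam k < 1} = ?K" by blast
  hence tr: "tr_abs_pow_below1 A s = (\<Sum>k\<in>?K. \<bar>lam k\<bar> ^ s)"
    by (simp add: tr_abs_pow_below1_eq)
  have "\<bar>mtrace (A ^\<^sub>m s) - 1\<bar> = \<bar>\<Sum>k\<in>?K. lam k ^ s\<bar>"
    using trace_pow sum.remove[of "{..<n}" k0 "\<lambda>k. lam k ^ s"] k0 by simp
  also have "\<dots> \<le> (\<Sum>k\<in>?K. \<bar>lam k\<bar> ^ s)"
    by (rule order_trans[OF sum_abs]) (simp add: power_abs)
  finally show ?thesis
    using sum_abs_dev_shift[OF n, of "\<lambda>i. (A ^\<^sub>m s) $$ (i,i)" "mtrace (A ^\<^sub>m s)" 1]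
      diag_pow_deviation_from_uniform[OF st irr k0, of s] tr by linarith
qed

end

lemma entry_norm_mdiag_deviation:
  assumes P: "P \<in> carrier_mat N N"
  shows "entry_norm ((1 / real N) \<cdot>\<^sub>m mdiag P - (t / real N ^ 2) \<cdot>\<^sub>m 1\<^sub>m N)
           = (\<Sum>i<N. \<bar>P $$ (i,i) - t / N\<bar>) / N"
proof -
  have "\<bar>1 / real N * P $$ (i,i) - t / real N ^ 2\<bar> = \<bar>P $$ (i,i) - t / N\<bar> / N" for i
  proof -
    have "1 / real N * P $$ (i,i) - t / real N ^ 2 = (P $$ (i,i) - t / N) / N"
      by (simp add: power2_eq_square diff_divide_distrib)
    thus ?thesis by simp
  qed
  thus ?thesis by (simp add: entry_norm_scaled_mdiag_shift[OF P] sum_divide_distrib)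
qed

lemma entry_norm_mdiag_average_le:
  assumes st: "stochastic N Q" and col: "\<And>k. k < N \<Longrightarrow> (\<Sum>i<N. Q $$ (i,k)) = 1"
    and P: "P \<in> carrier_mat N N"
  shows "entry_norm (mdiag (Q * mdiag P * Jmat N) - (t / real N ^ 2) \<cdot>\<^sub>m 1\<^sub>m N)
           \<le> entry_norm ((1 / real N) \<cdot>\<^sub>m mdiag P - (t / real N ^ 2) \<cdot>\<^sub>m 1\<^sub>m N)"
proof -
  have "entry_norm (mdiag (Q * mdiag P * Jmat N) - (t / real N ^ 2) \<cdot>\<^sub>m 1\<^sub>m N)
      = (\<Sum>i<N. \<bar>(\<Sum>k<N. Q $$ (i,k) * (P $$ (k,k) / N)) - t / real N ^ 2\<bar>)"
    using stochasticD(1)[OF st] P by (simp add: entry_norm_mdiag_average_shift sum_divide_distrib)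
  also have "\<dots> \<le> (\<Sum>k<N. \<bar>P $$ (k,k) / N - t / real N ^ 2\<bar>)"
    by (rule doubly_stochastic_abs_dev_le[OF st col])
  also have "\<dots> = entry_norm ((1 / real N) \<cdot>\<^sub>m mdiag P - (t / real N ^ 2) \<cdot>\<^sub>m 1\<^sub>m N)"
    using P by (simp add: entry_norm_scaled_mdiag_shift)
  finally show ?thesis .
qed

lemma diag_pow_deviation_le_Rset:
  assumes st: "stochastic N Q" and N: "N > 0" and \<gamma>: "\<gamma> \<ge> 0"
  shows "(\<Sum>i<N. \<bar>(Q ^\<^sub>m s) $$ (i,i) - mtrace (Q ^\<^sub>m s) / N\<bar>)
           \<le> 2 * real (Min ((\<lambda>x. N - card (Rset N Q \<gamma> x s)) ` {..<N})) + N * \<gamma>"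
proof -
  let ?f = "\<lambda>x. N - card (Rset N Q \<gamma> x s)"
  obtain x where x: "x < N" "Min (?f ` {..<N}) = ?f x"
    using N Min_in[of "?f ` {..<N}"] by fastforce
  have "Rset N Q \<gamma> x s \<subseteq> {..<N}" by (auto simp: Rset_def)
  hence "real (?f x) = real N - card (Rset N Q \<gamma> x s)"
    using card_mono[of "{..<N}"] by (simp add: of_nat_diff)
  moreover have "0 \<le> (Q ^\<^sub>m s) $$ (i,i) \<and> (Q ^\<^sub>m s) $$ (i,i) \<le> 1" if "i < N" for i
    using stochasticD(2)[OF stochastic_pow[OF st]] stochastic_entry_le_1[OF stochastic_pow[OF st]]
      that by blast
  ultimately show ?thesis
    using sum_abs_dev_mean_le_near_count[OF N _ x(1) \<gamma>, of "\<lambda>i. (Q ^\<^sub>m s) $$ (i,i)"]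
      stochasticD(1)[OF st]
    unfolding x(2) by (simp add: mtrace_def Rset_def)
qed

theorem lemma4p8:
  fixes N :: nat and Q :: "real mat" and s :: nat and \<gamma> :: real
  assumes "N > 8"
    and "stochastic N Q"
    and "irreducible_mat N Q"
    and "\<forall>i<N. \<forall>j<N. Q $$ (i,j) = Q $$ (j,i)"
    and "mtrace Q = 0"
    and "s \<ge> 1"
    and "0 \<le> \<gamma>" and "\<gamma> \<le> 1"
  shows "entry_norm (mdiag (Q * mdiag (Q ^\<^sub>m s) * Jmat N) - (mtrace (Q ^\<^sub>m s) / real N ^ 2) \<cdot>\<^sub>m 1\<^sub>m N)
           \<le> entry_norm ((1 / real N) \<cdot>\<^sub>m mdiag (Q ^\<^sub>m s) - (mtrace (Q ^\<^sub>m s) / real N ^ 2) \<cdot>\<^sub>m 1\<^sub>m N)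
         \<and> entry_norm ((1 / real N) \<cdot>\<^sub>m mdiag (Q ^\<^sub>m s) - (mtrace (Q ^\<^sub>m s) / real N ^ 2) \<cdot>\<^sub>m 1\<^sub>m N)
           \<le> min (4 * real (Min ((\<lambda>x. N - card (Rset N Q \<gamma> x s)) ` {..<N})) / real N + \<gamma>)
                  (2 * tr_abs_pow_below1 Q s / real N)"
proof -
  note st = assms(2) and irr = assms(3)
  have N: "N > 0" using assms(1) by simp
  have Q: "Q \<in> carrier_mat N N" using stochasticD(1)[OF st] .
  have "transpose_mat Q = Q" using Q assms(4) by (intro eq_matI) auto
  then obtain U lam where od: "orthogonal_diagonalization N Q U lam"
    using real_symmetric_orthogonal_diagonalization[OF Q]
    unfolding orthogonal_diagonalization_def by blast
  have col: "(\<Sum>i<N. Q $$ (i,k)) = 1" if "k < N" for k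
    using stochasticD(3)[OF st that] assms(4) that by simp
  let ?dev = "\<Sum>i<N. \<bar>(Q ^\<^sub>m s) $$ (i,i) - mtrace (Q ^\<^sub>m s) / N\<bar>"
  have "?dev \<le> 2 * tr_abs_pow_below1 Q s"
    using orthogonal_diagonalization.diag_pow_deviation_le[OF od st irr N] .
  moreover have "?dev \<le> 2 * real (Min ((\<lambda>x. N - card (Rset N Q \<gamma> x s)) ` {..<N})) + N * \<gamma>"
    using diag_pow_deviation_le_Rset[OF st N assms(7)] .
  ultimately show ?thesis
    using entry_norm_mdiag_average_le[OF st col] entry_norm_mdiag_deviation Q N
    by (auto simp: divide_right_mono field_simps)
qed

end
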